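(* Let $Z\in\mathbb{R}^{n\times m}$ be fixed, $\theta^*\in\mathbb{R}^m$, and $\rho_\lambda:[0,\infty)\to[0,\infty)$ a regularizer. If $\operatorname{supp}(\theta^* )\subset S\subset U\subset[m]$, then $\mathcal{W}(Z,\theta^*;S)\subset\mathcal{W}(Z,\theta^*;U)$. In particular, for any random vector $\varepsilon\in\mathbb{R}^n$, the event $\{\varepsilon\in\mathcal{W}(Z,\theta^*;S)\}$ is contained in the event $\{\varepsilon\in\mathcal{W}(Z,\theta^*;U)\}$.
   Context: $\rho_\lambda(\theta)=\sum_i\rho_\lambda(|\theta_i|)$. For $y\in\mathbb{R}^n$ and $S\subset[m]$, $\mathcal{P}(y,Z;S)=\arg\min_{\theta\in\mathbb{R}^m,\ \operatorname{supp}(\theta)\subset S}\frac{1}{2n}\|y-Z\theta\|_2^2+\rho_\lambda(\theta)$ (the set of global minimizers). $\mathcal{W}(Z,\theta^*;S)=\{w\in\mathbb{R}^n:\exists\,\hat\theta\in\mathcal{P}(Z\theta^*+w,Z;S)\text{ with }\operatorname{supp}(\hat\theta)\neq\operatorname{supp}(\theta^* )\}$.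
   Formalization: The set $\mathcal{P}(Z\theta^*+w,Z;U)$ of global minimizers over U is also taken to be nonempty for every $w\in\mathbb{R}^n$. The statement above fails without it. *)

theory Defs
  imports "HOL-Analysis.Analysis"
begin

text \<open>Vectors in R^m are real^'m, the index set [m] is UNIV :: 'm set;
  the design matrix Z in R^(n x m) is real^'m^'n (n rows, m columns).\<close>

definition supp :: "real^'m \<Rightarrow> 'm set" where
  "supp \<theta> = {i. \<theta> $ i \<noteq> 0}"

definition objective :: "(real \<Rightarrow> real) \<Rightarrow> real^'n \<Rightarrow> real^'m^'n \<Rightarrow> real^'m \<Rightarrow> real" where
  "objective \<rho> y Z \<theta> = (norm (y - Z *v \<theta>))\<^sup>2 / (2 * real CARD('n)) + (\<Sum>i\<in>UNIV. \<rho> \<bar>\<theta> $ i\<bar>)"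

definition Pset :: "(real \<Rightarrow> real) \<Rightarrow> real^'n \<Rightarrow> real^'m^'n \<Rightarrow> 'm set \<Rightarrow> (real^'m) set" where
  "Pset \<rho> y Z S = {\<theta>. supp \<theta> \<subseteq> S \<and>
      (\<forall>\<theta>'. supp \<theta>' \<subseteq> S \<longrightarrow> objective \<rho> y Z \<theta> \<le> objective \<rho> y Z \<theta>')}"

definition Wset :: "(real \<Rightarrow> real) \<Rightarrow> real^'m^'n \<Rightarrow> real^'m \<Rightarrow> 'm set \<Rightarrow> (real^'n) set" where
  "Wset \<rho> Z \<theta>s S = {w. \<exists>\<theta>h\<in>Pset \<rho> (Z *v \<theta>s + w) Z S. supp \<theta>h \<noteq> supp \<theta>s}"

end

theory Submission
  imports Defs
begin

text \<open>Take a wrong-support minimiser over S and any minimiser over U. If the latter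
  has the wrong support we are done; otherwise its support is that of \<theta>*, so it is
  supported in S, the two optimal values coincide, and the minimiser over S is
  also a minimiser over U.\<close>

lemma Pset_subset_Pset_if_minimiser_supported:
  assumes "S \<subseteq> U" and "\<theta>u \<in> Pset \<rho> y Z U" and "supp \<theta>u \<subseteq> S"
  shows "Pset \<rho> y Z S \<subseteq> Pset \<rho> y Z U"
proof
  fix \<theta> assume \<theta>: "\<theta> \<in> Pset \<rho> y Z S"
  let ?f = "objective \<rho> y Z"
  have "?f \<theta> \<le> ?f \<theta>u"
    using \<theta> assms(3) unfolding Pset_def by blast
  also have "?f \<theta>u \<le> ?f \<theta>'" if "supp \<theta>' \<subseteq> U" for \<theta>'
    using assms(2) that unfolding Pset_def by blast
  finally show "\<theta> \<in> Pset \<rho> y Z U"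
    using \<theta> assms(1) unfolding Pset_def by blast
qed

lemma Wset_mono:
  assumes "supp \<theta>s \<subseteq> S" and "S \<subseteq> U"
    and exists_min: "\<And>w. Pset \<rho> (Z *v \<theta>s + w) Z U \<noteq> {}"
  shows "Wset \<rho> Z \<theta>s S \<subseteq> Wset \<rho> Z \<theta>s U"
proof
  fix w assume "w \<in> Wset \<rho> Z \<theta>s S"
  then obtain \<theta> where \<theta>: "\<theta> \<in> Pset \<rho> (Z *v \<theta>s + w) Z S" "supp \<theta> \<noteq> supp \<theta>s"
    unfolding Wset_def by blast
  obtain \<theta>u where \<theta>u: "\<theta>u \<in> Pset \<rho> (Z *v \<theta>s + w) Z U"
    using exists_min by blast
  show "w \<in> Wset \<rho> Z \<theta>s U"
  proof (cases "supp \<theta>u = supp \<theta>s")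
    case True
    then have "\<theta> \<in> Pset \<rho> (Z *v \<theta>s + w) Z U"
      using Pset_subset_Pset_if_minimiser_supported[OF \<open>S \<subseteq> U\<close> \<theta>u] \<theta>(1) assms(1)
      by auto
    then show ?thesis
      using \<theta>(2) unfolding Wset_def by blast
  next
    case False
    then show ?thesis
      using \<theta>u unfolding Wset_def by blast
  qed
qed

theorem lemma6:
  fixes Z :: "real^'m^'n" and \<theta>s :: "real^'m" and \<rho> :: "real \<Rightarrow> real"
    and S U :: "'m set"
  assumes rho_nonneg: "\<And>t. t \<ge> 0 \<Longrightarrow> \<rho> t \<ge> 0"
    and exists_min: "\<And>w. Pset \<rho> (Z *v \<theta>s + w) Z U \<noteq> {}"
    and "supp \<theta>s \<subseteq> S" and "S \<subseteq> U"
  shows "Wset \<rho> Z \<theta>s S \<subseteq> Wset \<rho> Z \<theta>s U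
     \<and> (\<forall>\<epsilon> :: 'w \<Rightarrow> real^'n. {x. \<epsilon> x \<in> Wset \<rho> Z \<theta>s S} \<subseteq> {x. \<epsilon> x \<in> Wset \<rho> Z \<theta>s U})"
  using Wset_mono[OF \<open>supp \<theta>s \<subseteq> S\<close> \<open>S \<subseteq> U\<close> exists_min] by blast

end
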